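(* Let $N\ge3$. For $\alpha>0$ let $$\Lambda_\alpha=\inf_{0\ne u\in H^1_{0,\mathrm{rad}}(B)}\frac{\int_B|Du|^2dx}{\int_B(1-|x|)^\alpha|u|^2dx}.$$ Then there exists $C>0$ such that $\liminf_{\alpha\to\infty}\alpha^{-2}\Lambda_\alpha\ge C$.
   Context: $B=B(0,1)\subset\mathbb R^N$; $H^1_{0,\mathrm{rad}}(B)$ denotes radial functions in $H^1_0(B)$. ($\Lambda_\alpha$ is the radial best constant $S_{\alpha,\mathrm{rad}}$ in the case $R=1$, $p=1$.) *)

theory Defs
  imports "HOL-Analysis.Analysis"
begin

coinductive smooth_fun :: "('a::euclidean_space \<Rightarrow> real) \<Rightarrow> bool" where
  "(\<forall>x. f differentiable (at x)) \<Longrightarrow>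
   (\<forall>i\<in>Basis. smooth_fun (\<lambda>x. frechet_derivative f (at x) i)) \<Longrightarrow> smooth_fun f"

definition grad :: "('a::euclidean_space \<Rightarrow> real) \<Rightarrow> 'a \<Rightarrow> 'a" where
  "grad f x = (\<Sum>i\<in>Basis. frechet_derivative f (at x) i *\<^sub>R i)"

definition test_fun :: "('a::euclidean_space \<Rightarrow> real) \<Rightarrow> bool" where
  "test_fun \<phi> \<longleftrightarrow> smooth_fun \<phi> \<and> closure {x. \<phi> x \<noteq> 0} \<subseteq> ball 0 1"

text \<open>H^1_0(B) as the completion of C_c^infinity(B) in the H^1 norm:
  u belongs to H^1_0(B) with weak gradient G iff some sequence of test functions
  converges to u in L^2 and whose gradients converge to G in L^2.\<close>
definition H10 :: "('a::euclidean_space \<Rightarrow> real) \<Rightarrow> ('a \<Rightarrow> 'a) \<Rightarrow> bool" where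
  "H10 u G \<longleftrightarrow> u \<in> borel_measurable lborel \<and> G \<in> borel_measurable lborel \<and>
     (\<exists>\<phi>. (\<forall>k. test_fun (\<phi> k)) \<and>
        (\<lambda>k. \<integral>\<^sup>+ x. ennreal ((\<phi> k x - u x)\<^sup>2) \<partial>lborel) \<longlonglongrightarrow> 0 \<and>
        (\<lambda>k. \<integral>\<^sup>+ x. ennreal ((norm (grad (\<phi> k) x - G x))\<^sup>2) \<partial>lborel) \<longlonglongrightarrow> 0)"

definition radial :: "('a::euclidean_space \<Rightarrow> real) \<Rightarrow> bool" where
  "radial u \<longleftrightarrow> (\<forall>x y. norm x = norm y \<longrightarrow> u x = u y)"

definition Lambda :: "'a::euclidean_space itself \<Rightarrow> real \<Rightarrow> real" where
  "Lambda TYPE('a) \<alpha> = Inf {(\<integral>x. (norm (G x))\<^sup>2 \<partial>lborel) /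
        (\<integral>x\<in>ball 0 1. (1 - norm x) powr \<alpha> * (u x)\<^sup>2 \<partial>lborel) | (u :: 'a \<Rightarrow> real) G.
        H10 u G \<and> radial u \<and> (\<integral>\<^sup>+ x. ennreal ((u x)\<^sup>2) \<partial>lborel) \<noteq> 0}"

end

(*
  Hardy's inequality with a regularised weight: for N \<ge> 3, \<delta> > 0 and every u in H^1_0(B),
  \<integral> u\<^sup>2 / (4 (|x|\<^sup>2 + \<delta>\<^sup>2)) \<le> 4 \<integral> |Du|\<^sup>2.  For a test function \<phi> it holds with constant 1: with
  d = |x|\<^sup>2 + \<delta>\<^sup>2 and F = \<phi>\<^sup>2 / (2 d) one has \<phi>\<^sup>2 / (4 d) \<le> |D\<phi>|\<^sup>2 + x \<bullet> DF + N F pointwise, and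
  \<integral> x \<bullet> DF = -N \<integral> F.  It passes to the H^1_0 closure at the cost of the factor 4.
  Choosing \<delta> = 1/\<alpha>, the weight of \<Lambda>_\<alpha> satisfies (1 - |x|)^\<alpha> \<le> e^(-\<alpha>|x|) \<le> 8/\<alpha>\<^sup>2 \<cdot> 1/(4 d), so
  every quotient in the definition of \<Lambda>_\<alpha> is at least \<alpha>\<^sup>2/32.
*)

theory Submission
  imports Defs "HOL-Computational_Algebra.Polynomial"
begin

section \<open>Smoothness of flat exponentials\<close>

definition flat_exp :: "real poly \<Rightarrow> real \<Rightarrow> real" where
  "flat_exp P t = (if t > 0 then poly P (1/t) * exp (-1/t) else 0)"

definition flat_exp_deriv_poly :: "real poly \<Rightarrow> real poly" where
  "flat_exp_deriv_poly P = monom 1 2 * (P - pderiv P)"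

lemma poly_times_exp_neg_tendsto_0:
  fixes P :: "real poly"
  shows "((\<lambda>y. poly P y * exp (-y)) \<longlongrightarrow> 0) at_top"
proof -
  have "((\<lambda>y. \<Sum>i\<le>degree P. coeff P i * (y ^ i / exp y)) \<longlongrightarrow> (\<Sum>i\<le>degree P. coeff P i * 0)) at_top"
    by (intro tendsto_sum tendsto_mult tendsto_const tendsto_power_div_exp_0)
  moreover have "(\<lambda>y. \<Sum>i\<le>degree P. coeff P i * (y ^ i / exp y)) = (\<lambda>y. poly P y * exp (-y))"
    by (auto simp: poly_altdef sum_divide_distrib exp_minus field_simps)
  ultimately show ?thesis by simp
qed

lemma has_real_derivative_flat_exp:
  "(flat_exp P has_real_derivative flat_exp (flat_exp_deriv_poly P) t) (at t)"
proof (cases t "0::real" rule: linorder_cases)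
  case greater
  have "((\<lambda>t. poly P (1/t) * exp (-1/t)) has_real_derivative
      poly (pderiv P) (1/t) * (- 1 / t^2) * exp (-1/t) + poly P (1/t) * (exp (-1/t) * (1 / t^2))) (at t)"
    using greater
    by (auto intro!: derivative_eq_intros DERIV_chain2[OF poly_DERIV] simp: power2_eq_square field_simps)
  also have "poly (pderiv P) (1/t) * (- 1 / t^2) * exp (-1/t) + poly P (1/t) * (exp (-1/t) * (1 / t^2))
      = flat_exp (flat_exp_deriv_poly P) t"
    using greater by (simp add: flat_exp_def flat_exp_deriv_poly_def poly_monom field_simps power2_eq_square)
  finally show ?thesis
    by (rule has_field_derivative_transform_within_open[of _ _ _ "{0<..}"])
      (use greater in \<open>auto simp: flat_exp_def\<close>)
next
  case less
  have "((\<lambda>t. 0) has_real_derivative flat_exp (flat_exp_deriv_poly P) t) (at t)"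
    using less by (simp add: flat_exp_def)
  then show ?thesis
    by (rule has_field_derivative_transform_within_open[of _ _ _ "{..<0}"])
      (use less in \<open>auto simp: flat_exp_def\<close>)
next
  case equal
  have "((\<lambda>y. (flat_exp P y - flat_exp P 0) / (y - 0)) \<longlongrightarrow> 0) (at 0)"
  proof (rule filterlim_split_at_real)
    show "((\<lambda>y. (flat_exp P y - flat_exp P 0) / (y - 0)) \<longlongrightarrow> 0) (at_left 0)"
      by (rule Lim_transform_within[where f="\<lambda>_. 0" and d=1]) (auto simp: flat_exp_def)
    have "((\<lambda>x. poly (monom 1 1 * P) (inverse x) * exp (- inverse x)) \<longlongrightarrow> 0) (at_right 0)"
      by (rule filterlim_compose[OF poly_times_exp_neg_tendsto_0 filterlim_inverse_at_top_right])
    then show "((\<lambda>y. (flat_exp P y - flat_exp P 0) / (y - 0)) \<longlongrightarrow> 0) (at_right 0)"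
      by (rule Lim_transform_within[where d=1]) (auto simp: flat_exp_def poly_monom field_simps)
  qed
  then show ?thesis
    using equal by (simp add: has_field_derivative_iff flat_exp_def)
qed

lemma has_derivative_flat_exp_radial:
  "((\<lambda>x. flat_exp P (1/4 - x \<bullet> x)) has_derivative
    (\<lambda>h. flat_exp (flat_exp_deriv_poly P) (1/4 - x \<bullet> x) * ((-2) * (x \<bullet> h)))) (at x)"
proof -
  have "((\<lambda>x. 1/4 - x \<bullet> x) has_derivative (\<lambda>h. (-2) * (x \<bullet> h))) (at x)"
    by (auto intro!: derivative_eq_intros simp: inner_commute)
  from has_derivative_compose[OF this has_field_derivative_imp_has_derivative[OF has_real_derivative_flat_exp]]
  show ?thesis by (simp add: o_def)
qed

text \<open>A class of functions closed under partial differentiation, so that all its members are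
  smooth by coinduction.\<close>
inductive flat_exp_algebra :: "('a::euclidean_space \<Rightarrow> real) \<Rightarrow> bool" where
  const: "flat_exp_algebra (\<lambda>x. c)"
| coord: "flat_exp_algebra (\<lambda>x. x \<bullet> v)"
| flat_exp: "flat_exp_algebra (\<lambda>x. flat_exp P (1/4 - x \<bullet> x))"
| add: "flat_exp_algebra f \<Longrightarrow> flat_exp_algebra g \<Longrightarrow> flat_exp_algebra (\<lambda>x. f x + g x)"
| mult: "flat_exp_algebra f \<Longrightarrow> flat_exp_algebra g \<Longrightarrow> flat_exp_algebra (\<lambda>x. f x * g x)"

lemma flat_exp_algebra_has_derivative:
  assumes "flat_exp_algebra f"
  obtains f' where "\<And>x. (f has_derivative f' x) (at x)" "\<And>v. flat_exp_algebra (\<lambda>x. f' x v)"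
  using assms
proof (induction arbitrary: thesis)
  case (const c)
  show ?case
    by (rule const.prems[of "\<lambda>x h. 0"]) (auto intro: flat_exp_algebra.const)
next
  case (coord v)
  show ?case
    by (rule coord.prems[of "\<lambda>x h. h \<bullet> v"]) (auto intro!: derivative_eq_intros flat_exp_algebra.const)
next
  case (flat_exp P)
  show ?case
    by (rule flat_exp.prems[OF has_derivative_flat_exp_radial]) (intro flat_exp_algebra.intros)
next
  case (add f g)
  obtain f' g' where "\<And>x. (f has_derivative f' x) (at x)" "\<And>v. flat_exp_algebra (\<lambda>x. f' x v)"
    and "\<And>x. (g has_derivative g' x) (at x)" "\<And>v. flat_exp_algebra (\<lambda>x. g' x v)"
    using add.IH by metis
  then show ?case
    by (intro add.prems[of "\<lambda>x h. f' x h + g' x h"]) (auto intro!: derivative_eq_intros flat_exp_algebra.add)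
next
  case (mult f g)
  obtain f' g' where "\<And>x. (f has_derivative f' x) (at x)" "\<And>v. flat_exp_algebra (\<lambda>x. f' x v)"
    and "\<And>x. (g has_derivative g' x) (at x)" "\<And>v. flat_exp_algebra (\<lambda>x. g' x v)"
    using mult.IH by metis
  with mult.hyps show ?case
    by (intro mult.prems[of "\<lambda>x h. f x * g' x h + f' x h * g x"])
      (auto intro!: derivative_eq_intros flat_exp_algebra.add flat_exp_algebra.mult)
qed

lemma flat_exp_algebra_smooth:
  assumes "flat_exp_algebra f"
  shows "smooth_fun f"
  using assms
proof (coinduction arbitrary: f)
  case smooth_fun
  then obtain f' where f': "\<And>x. (f has_derivative f' x) (at x)" "\<And>v. flat_exp_algebra (\<lambda>x. f' x v)"
    using flat_exp_algebra_has_derivative by blast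
  then have "(\<lambda>x. frechet_derivative f (at x) i) = (\<lambda>x. f' x i)" for i
    by (metis frechet_derivative_at)
  with f' show ?case
    by (auto simp: differentiable_def)
qed

section \<open>Test functions\<close>

lemma smooth_fun_differentiable: "smooth_fun f \<Longrightarrow> f differentiable (at x)"
  by (erule smooth_fun.cases) auto

lemma smooth_fun_partial_derivative:
  "smooth_fun f \<Longrightarrow> i \<in> Basis \<Longrightarrow> smooth_fun (\<lambda>x. frechet_derivative f (at x) i)"
  by (erule smooth_fun.cases) auto

lemma frechet_derivative_eq_inner_grad:
  assumes "f differentiable (at x)"
  shows "frechet_derivative f (at x) h = grad f x \<bullet> h"
proof -
  have lin: "linear (frechet_derivative f (at x))"
    using assms frechet_derivative_works has_derivative_linear by blast
  have "frechet_derivative f (at x) h = frechet_derivative f (at x) (\<Sum>i\<in>Basis. (h \<bullet> i) *\<^sub>R i)"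
    by (simp add: euclidean_representation)
  also have "\<dots> = (\<Sum>i\<in>Basis. (h \<bullet> i) * frechet_derivative f (at x) i)"
    using lin by (simp add: linear_sum linear_scale)
  also have "\<dots> = grad f x \<bullet> h"
    unfolding grad_def inner_sum_left by (auto intro!: sum.cong simp: inner_commute)
  finally show ?thesis .
qed

lemma test_fun_has_derivative:
  assumes "test_fun \<phi>"
  shows "(\<phi> has_derivative (\<lambda>h. grad \<phi> x \<bullet> h)) (at x)"
proof -
  have diff: "\<phi> differentiable (at x)"
    using assms smooth_fun_differentiable by (auto simp: test_fun_def)
  then have "(\<phi> has_derivative frechet_derivative \<phi> (at x)) (at x)"
    by (simp add: frechet_derivative_works)
  moreover have "frechet_derivative \<phi> (at x) = (\<lambda>h. grad \<phi> x \<bullet> h)"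
    using frechet_derivative_eq_inner_grad[OF diff] by (rule ext)
  ultimately show ?thesis by simp
qed

lemma continuous_on_test_fun: "test_fun \<phi> \<Longrightarrow> continuous_on UNIV \<phi>"
  using has_derivative_continuous[OF test_fun_has_derivative]
  by (auto intro: continuous_at_imp_continuous_on)

lemma continuous_on_grad_test_fun:
  assumes "test_fun \<phi>"
  shows "continuous_on UNIV (grad \<phi>)"
proof -
  have "continuous_on UNIV (\<lambda>x. frechet_derivative \<phi> (at x) i)" if "i \<in> Basis" for i
  proof -
    have "smooth_fun (\<lambda>x. frechet_derivative \<phi> (at x) i)"
      using assms that by (auto simp: test_fun_def intro: smooth_fun_partial_derivative)
    then have "isCont (\<lambda>x. frechet_derivative \<phi> (at x) i) x" for x
      using smooth_fun_differentiable differentiable_imp_continuous_within by blast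
    then show ?thesis
      by (simp add: continuous_at_imp_continuous_on)
  qed
  then show ?thesis
    unfolding grad_def[abs_def] by (intro continuous_on_sum continuous_on_scaleR continuous_on_const) auto
qed

lemma test_fun_vanishes:
  assumes "test_fun \<phi>" "1 \<le> norm x"
  shows "\<phi> x = 0" and "grad \<phi> x = 0"
proof -
  let ?K = "closure {x. \<phi> x \<noteq> 0}"
  have "?K \<subseteq> ball 0 1"
    using assms(1) by (simp add: test_fun_def)
  moreover have "x \<notin> ball 0 1"
    using assms(2) by simp
  ultimately have x: "x \<notin> ?K" by blast
  have zero: "\<phi> y = 0" if "y \<notin> ?K" for y
    using that closure_subset[of "{x. \<phi> x \<noteq> 0}"] by auto
  show "\<phi> x = 0"
    using zero x .
  have "(\<lambda>_. 0) = frechet_derivative (\<lambda>_. 0::real) (at x)"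
    by (rule frechet_derivative_at) simp
  also have "\<dots> = frechet_derivative \<phi> (at x)"
  proof (rule frechet_derivative_transform_within_open[where X = "- ?K"])
    show "open (- ?K)" by (intro open_Compl closed_closure)
    show "x \<in> - ?K" using x by blast
    show "(\<lambda>_. 0) y = \<phi> y" if "y \<in> - ?K" for y
      using zero that by (metis ComplD)
  qed simp
  finally have "frechet_derivative \<phi> (at x) = (\<lambda>_. 0)"
    by (rule sym)
  then show "grad \<phi> x = 0"
    by (simp add: grad_def)
qed

definition bump :: "'a::euclidean_space \<Rightarrow> real" where
  "bump x = flat_exp 1 (1/4 - x \<bullet> x)"

lemma bump_eq_0_iff: "bump x = 0 \<longleftrightarrow> 1/2 \<le> norm x"
proof -
  have "1/2 \<le> norm x \<longleftrightarrow> (1/2)\<^sup>2 \<le> (norm x)\<^sup>2"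
    using abs_le_square_iff[of "1/2" "norm x"] by simp
  then show ?thesis
    by (simp add: bump_def flat_exp_def power2_norm_eq_inner power_divide not_less)
qed

lemma bump_test_fun: "test_fun bump"
proof -
  have "smooth_fun (bump :: 'a \<Rightarrow> real)"
    unfolding bump_def[abs_def] by (intro flat_exp_algebra_smooth flat_exp_algebra.flat_exp)
  moreover have "closure {x::'a. bump x \<noteq> 0} \<subseteq> cball 0 (1/2)"
    by (intro closure_minimal) (auto simp: bump_eq_0_iff mem_cball_0)
  moreover have "cball (0::'a) (1/2) \<subseteq> ball 0 1"
    by (auto simp: mem_cball_0 mem_ball_0)
  ultimately show ?thesis by (auto simp: test_fun_def)
qed

lemma radial_bump: "radial bump"
  unfolding radial_def bump_def by (simp add: power2_norm_eq_inner[symmetric])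

lemma H10_bump: "H10 bump (grad bump)"
  using bump_test_fun continuous_on_test_fun continuous_on_grad_test_fun
  unfolding H10_def by (auto intro!: exI[of _ "\<lambda>k. bump"] borel_measurable_continuous_onI)

lemma nn_integral_bump_sq_nonzero: "(\<integral>\<^sup>+ x. ennreal ((bump x)\<^sup>2) \<partial>lborel) \<noteq> (0::ennreal)"
proof
  have "(\<lambda>x::'a. (bump x)\<^sup>2) \<in> borel_measurable borel"
    using continuous_on_test_fun[OF bump_test_fun]
    by (intro borel_measurable_continuous_onI continuous_on_power)
  then have meas: "(\<lambda>x::'a. ennreal ((bump x)\<^sup>2)) \<in> borel_measurable lborel"
    by simp
  assume "(\<integral>\<^sup>+ x. ennreal ((bump (x::'a))\<^sup>2) \<partial>lborel) = 0"
  then have "AE x in lborel. ennreal ((bump (x::'a))\<^sup>2) = 0"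
    by (simp only: nn_integral_0_iff_AE[OF meas])
  then have "AE x in lborel. (x::'a) \<notin> ball 0 (1/2)"
    by (rule eventually_mono) (auto simp: bump_eq_0_iff mem_ball_0)
  then have "emeasure lborel (ball (0::'a) (1/2)) = 0"
    by (subst (asm) AE_iff_measurable[of "ball 0 (1/2)"]) auto
  then show False
    using unit_ball_vol_pos[of "real DIM('a)"] by (simp add: emeasure_ball)
qed

section \<open>Integrals of compactly supported functions\<close>

lemma continuous_compact_support_bounded:
  fixes f :: "'a::topological_space \<Rightarrow> 'b::real_normed_vector"
  assumes "continuous_on UNIV f" "compact K" "\<And>x. x \<notin> K \<Longrightarrow> f x = 0"
  obtains M where "\<And>x. norm (f x) \<le> M"
proof -
  have "bounded (f ` K)"
    using assms(1,2) by (intro compact_imp_bounded compact_continuous_image)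
      (auto intro: continuous_on_subset)
  then obtain M where "M > 0" "\<And>x. x \<in> K \<Longrightarrow> norm (f x) \<le> M"
    by (auto simp: bounded_pos)
  with assms(3) have "norm (f x) \<le> M" for x
    by (cases "x \<in> K") auto
  then show ?thesis by (rule that)
qed

lemma integrable_continuous_compact_support:
  fixes f :: "'a::euclidean_space \<Rightarrow> real"
  assumes cont: "continuous_on UNIV f" and K: "compact K" and supp: "\<And>x. x \<notin> K \<Longrightarrow> f x = 0"
  shows "integrable lborel f"
proof -
  obtain M where M: "\<And>x. norm (f x) \<le> M"
    using continuous_compact_support_bounded[OF assms] by blast
  have "integrable lborel (\<lambda>x. M * indicator K x)"
    using K by (intro integrable_mult_right integrable_real_indicator)
      (use emeasure_compact_finite in \<open>auto simp: compact_imp_closed\<close>)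
  then show ?thesis
  proof (rule Bochner_Integration.integrable_bound)
    show "f \<in> borel_measurable lborel"
      using cont by (simp add: borel_measurable_continuous_onI)
    show "AE x in lborel. norm (f x) \<le> norm (M * indicator K x)"
      using M supp by (intro AE_I2) (auto simp: indicator_def intro: order_trans[OF _ abs_ge_self])
  qed
qed

lemma integrable_continuous_vanishing_outside_ball:
  fixes f :: "'a::euclidean_space \<Rightarrow> real"
  assumes "continuous_on UNIV f" "\<And>x. 1 \<le> norm x \<Longrightarrow> f x = 0"
  shows "integrable lborel f"
  using assms by (intro integrable_continuous_compact_support[OF _ compact_cball[of 0 1]]) auto

lemma integral_lborel_scaleR:
  fixes F :: "'a::euclidean_space \<Rightarrow> real"
  assumes F: "F \<in> borel_measurable borel" and c: "c > 0"
  shows "(\<integral>x. F (c *\<^sub>R x) \<partial>lborel) = (\<integral>x. F x \<partial>lborel) / c ^ DIM('a)"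
proof -
  have "(\<integral>x. F x \<partial>lborel) =
      (\<integral>x. F x \<partial>density (distr lborel borel (\<lambda>x. 0 + c *\<^sub>R x)) (\<lambda>_. \<bar>c\<bar> ^ DIM('a)))"
    using lborel_affine[of c 0] c by (metis less_irrefl)
  also have "\<dots> = (\<integral>x. \<bar>c\<bar> ^ DIM('a) * F (0 + c *\<^sub>R x) \<partial>lborel)"
    using F by (simp add: integral_density integral_distr)
  finally show ?thesis using c by simp
qed

lemma LIMSEQ_difference_quotient:
  fixes f :: "real \<Rightarrow> real"
  assumes "(f has_real_derivative D) (at 0)"
  shows "(\<lambda>n. (f (1 / real (Suc n)) - f 0) / (1 / real (Suc n))) \<longlonglongrightarrow> D"
proof -
  have "((\<lambda>y. (f y - f 0) / (y - 0)) \<longlongrightarrow> D) (at 0)"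
    using assms by (simp add: has_field_derivative_iff)
  moreover have "filterlim (\<lambda>n. 1 / real (Suc n)) (at 0) sequentially"
    by (rule filterlim_atI) (use LIMSEQ_inverse_real_of_nat in \<open>auto simp: inverse_eq_divide\<close>)
  ultimately show ?thesis
    using filterlim_compose by fastforce
qed

lemma lipschitz_of_inner_derivative_bound:
  fixes F :: "'a::euclidean_space \<Rightarrow> real"
  assumes deriv: "\<And>x. (F has_derivative (\<lambda>h. V x \<bullet> h)) (at x)" and L: "\<And>x. norm (V x) \<le> L"
  shows "\<bar>F x - F y\<bar> \<le> L * norm (x - y)"
proof -
  have "norm (F x - F y) \<le> L * norm (x - y)"
  proof (rule differentiable_bound[of UNIV])
    show "(F has_derivative (\<lambda>h. V z \<bullet> h)) (at z within UNIV)" for z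
      using deriv by simp
    show "onorm (\<lambda>h. V z \<bullet> h) \<le> L" for z
      by (rule onorm_le) (metis Cauchy_Schwarz_ineq2 L mult_right_mono norm_ge_zero order_trans real_norm_def)
  qed auto
  then show ?thesis by simp
qed

lemma dilation_quotient_tendsto:
  fixes F :: "'a::euclidean_space \<Rightarrow> real"
  assumes "(F has_derivative (\<lambda>h. V \<bullet> h)) (at x)"
  shows "(\<lambda>n. (F ((1 + 1 / real (Suc n)) *\<^sub>R x) - F x) / (1 / real (Suc n))) \<longlonglongrightarrow> V \<bullet> x"
proof -
  have path: "((\<lambda>y. x + y *\<^sub>R x) has_derivative (\<lambda>y. y *\<^sub>R x)) (at (0::real))"
    by (auto intro!: derivative_eq_intros)
  have "(F has_derivative (\<lambda>h. V \<bullet> h)) (at ((\<lambda>y. x + y *\<^sub>R x) 0))"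
    using assms by simp
  from has_derivative_compose[OF path this]
  have "((\<lambda>y. F (x + y *\<^sub>R x)) has_real_derivative V \<bullet> x) (at 0)"
    by (simp add: has_field_derivative_def o_def mult_commute_abs)
  from LIMSEQ_difference_quotient[OF this] show ?thesis
    by (simp add: algebra_simps)
qed

lemma dilation_quotient_bound:
  fixes F :: "'a::euclidean_space \<Rightarrow> real"
  assumes lip: "\<And>x y. \<bar>F x - F y\<bar> \<le> L * norm (x - y)" and L: "0 \<le> L"
    and F0: "\<And>x. 1 \<le> norm x \<Longrightarrow> F x = 0" and t: "0 < t"
  shows "\<bar>(F ((1 + t) *\<^sub>R x) - F x) / t\<bar> \<le> L * indicator (cball 0 1) x"
proof (cases "norm x \<le> 1")
  case True
  have "\<bar>F ((1 + t) *\<^sub>R x) - F x\<bar> \<le> L * (t * norm x)"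
    using lip[of "(1 + t) *\<^sub>R x" x] t by (simp add: algebra_simps)
  also have "\<dots> \<le> L * t"
    using True t L by (intro mult_left_mono) auto
  finally show ?thesis
    using True t by (simp add: abs_div divide_le_eq)
next
  case False
  then have "1 \<le> norm ((1 + t) *\<^sub>R x)"
    using t by (auto intro: order_trans[OF _ mult_right_mono[of 1 "1 + t"]])
  then show ?thesis
    using False by (simp add: F0)
qed

lemma integral_dilation_quotient:
  fixes F :: "'a::euclidean_space \<Rightarrow> real"
  assumes contF: "continuous_on UNIV F" and F0: "\<And>x. 1 \<le> norm x \<Longrightarrow> F x = 0" and t: "0 < t"
  shows "(\<integral>x. (F ((1 + t) *\<^sub>R x) - F x) / t \<partial>lborel) = ((1 / (1 + t) ^ DIM('a) - 1) / t) * (\<integral>x. F x \<partial>lborel)"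
proof -
  have measF: "F \<in> borel_measurable borel"
    using contF by (rule borel_measurable_continuous_onI)
  have int_scaled: "integrable lborel (\<lambda>x. F (c *\<^sub>R x))" if "1 \<le> c" for c
  proof (rule integrable_continuous_vanishing_outside_ball)
    show "continuous_on UNIV (\<lambda>x. F (c *\<^sub>R x))"
      by (intro continuous_on_compose2[OF contF]) (auto intro: continuous_intros)
    show "F (c *\<^sub>R x) = 0" if "1 \<le> norm x" for x
      using that \<open>1 \<le> c\<close> by (intro F0) (auto simp: mult_ge1_I)
  qed
  show ?thesis
    using int_scaled[of "1 + t"] int_scaled[of 1] integral_lborel_scaleR[OF measF, of "1 + t"] t
    by (simp add: diff_divide_distrib[symmetric] field_simps)
qed

text \<open>The integrated form of \<open>div (F x *\<^sub>R x) = V x \<bullet> x + N F x\<close>, obtained by differentiating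
  \<open>t \<mapsto> \<integral> F ((1 + t) x) dx = (1 + t)\<^sup>-\<^sup>N \<integral> F\<close> at \<open>t = 0\<close> under the integral sign.\<close>
lemma integral_radial_derivative:
  fixes F :: "'a::euclidean_space \<Rightarrow> real" and V :: "'a \<Rightarrow> 'a"
  assumes deriv: "\<And>x. (F has_derivative (\<lambda>h. V x \<bullet> h)) (at x)"
    and contV: "continuous_on UNIV V"
    and F0: "\<And>x. 1 \<le> norm x \<Longrightarrow> F x = 0" and V0: "\<And>x. 1 \<le> norm x \<Longrightarrow> V x = 0"
  shows "(\<integral>x. V x \<bullet> x \<partial>lborel) = - real DIM('a) * (\<integral>x. F x \<partial>lborel)"
proof -
  obtain L where L: "\<And>x. norm (V x) \<le> L"
    using continuous_compact_support_bounded[OF contV compact_cball[of 0 1]] V0 by force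
  then have L0: "0 \<le> L"
    using norm_ge_zero order_trans by blast
  note lip = lipschitz_of_inner_derivative_bound[OF deriv L]
  have contF: "continuous_on UNIV F"
    using deriv has_derivative_continuous continuous_at_imp_continuous_on by blast
  then have [measurable]: "F \<in> borel_measurable borel"
    by (rule borel_measurable_continuous_onI)
  define t :: "nat \<Rightarrow> real" where "t n = 1 / real (Suc n)" for n
  have t: "0 < t n" for n
    by (simp add: t_def)
  define s where "s n x = (F ((1 + t n) *\<^sub>R x) - F x) / t n" for n x
  have [measurable]: "s n \<in> borel_measurable lborel" for n
    unfolding s_def[abs_def] by measurable
  have lim_V: "(\<lambda>n. \<integral>x. s n x \<partial>lborel) \<longlonglongrightarrow> (\<integral>x. V x \<bullet> x \<partial>lborel)"
  proof (rule integral_dominated_convergence)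
    show "integrable lborel (\<lambda>x. L * indicator (cball (0::'a) 1) x)"
      by (intro integrable_mult_right integrable_real_indicator)
        (use emeasure_compact_finite[OF compact_cball] in auto)
    show "AE x in lborel. norm (s n x) \<le> L * indicator (cball 0 1) x" for n
      using dilation_quotient_bound[OF lip L0 F0 t] by (simp add: s_def)
    show "AE x in lborel. (\<lambda>n. s n x) \<longlonglongrightarrow> V x \<bullet> x"
      using dilation_quotient_tendsto[OF deriv] by (simp add: s_def t_def)
    show "(\<lambda>x. V x \<bullet> x) \<in> borel_measurable lborel"
      using contV by (simp add: borel_measurable_continuous_onI continuous_on_inner continuous_on_id)
  qed simp
  have integral_s: "(\<integral>x. s n x \<partial>lborel) = ((1 / (1 + t n) ^ DIM('a) - 1) / t n) * (\<integral>x. F x \<partial>lborel)" for n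
    unfolding s_def by (rule integral_dilation_quotient[OF contF F0 t])
  have "(\<lambda>n. (1 / (1 + t n) ^ DIM('a) - 1) / t n) \<longlonglongrightarrow> - real DIM('a)"
  proof -
    have "((\<lambda>y. 1 / (1 + y) ^ DIM('a)) has_real_derivative - real DIM('a)) (at 0)"
      by (auto intro!: derivative_eq_intros)
    from LIMSEQ_difference_quotient[OF this] show ?thesis
      by (simp add: t_def)
  qed
  then have "(\<lambda>n. \<integral>x. s n x \<partial>lborel) \<longlonglongrightarrow> - real DIM('a) * (\<integral>x. F x \<partial>lborel)"
    unfolding integral_s by (rule tendsto_mult_right)
  with lim_V show ?thesis
    by (rule LIMSEQ_unique)
qed

section \<open>Hardy's inequality\<close>

text \<open>Expand \<open>|2 d g + a x|\<^sup>2 \<ge> 0\<close>; the term \<open>N a\<^sup>2 / (2 d)\<close> comes from the divergence of \<open>x\<close>,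
  and \<open>N \<ge> 3\<close> is what makes it large enough.\<close>
lemma hardy_pointwise:
  fixes g x :: "'a::euclidean_space" and a d :: real
  assumes d: "0 < d" "x \<bullet> x \<le> d" and N: "DIM('a) \<ge> 3"
  shows "a\<^sup>2 / (4 * d) \<le> (norm g)\<^sup>2 + (a / d * (g \<bullet> x) - a\<^sup>2 / d\<^sup>2 * (x \<bullet> x)) + DIM('a) * (a\<^sup>2 / (2 * d))"
proof -
  have "0 \<le> ((2 * d) *\<^sub>R g + a *\<^sub>R x) \<bullet> ((2 * d) *\<^sub>R g + a *\<^sub>R x)"
    by (rule inner_ge_zero)
  then have sq: "0 \<le> 4 * d\<^sup>2 * (norm g)\<^sup>2 + 4 * a * d * (g \<bullet> x) + a\<^sup>2 * (x \<bullet> x)"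
    using power2_norm_eq_inner[of g]
    by (simp add: inner_add_left inner_add_right inner_commute algebra_simps power2_eq_square)
  have "5 * d \<le> (2 * real DIM('a) - 1) * d"
    using N d by (intro mult_right_mono) auto
  then have "5 * (x \<bullet> x) \<le> (2 * real DIM('a) - 1) * d"
    using d by linarith
  then have "0 \<le> a\<^sup>2 * ((2 * real DIM('a) - 1) * d - 5 * (x \<bullet> x))"
    by simp
  with sq have "a\<^sup>2 * d \<le> 4 * d\<^sup>2 * (norm g)\<^sup>2 + 4 * a * (g \<bullet> x) * d - 4 * a\<^sup>2 * (x \<bullet> x) + 2 * real DIM('a) * a\<^sup>2 * d"
    by (simp add: algebra_simps)
  then have "a\<^sup>2 * d / (4 * d\<^sup>2) \<le> (4 * d\<^sup>2 * (norm g)\<^sup>2 + 4 * a * (g \<bullet> x) * d - 4 * a\<^sup>2 * (x \<bullet> x) + 2 * real DIM('a) * a\<^sup>2 * d) / (4 * d\<^sup>2)"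
    using d by (intro divide_right_mono) auto
  with d show ?thesis
    by (simp add: power2_eq_square field_simps)
qed

lemma integrable_test_fun_sq_div:
  assumes "test_fun \<phi>" "continuous_on UNIV d" "\<And>x. d x \<noteq> 0"
  shows "integrable lborel (\<lambda>x. (\<phi> x)\<^sup>2 / d x)"
  using assms continuous_on_test_fun[OF assms(1)] test_fun_vanishes(1)[OF assms(1)]
  by (intro integrable_continuous_vanishing_outside_ball continuous_intros) auto

lemma integrable_grad_test_fun_sq:
  assumes "test_fun \<phi>"
  shows "integrable lborel (\<lambda>x. (norm (grad \<phi> x))\<^sup>2)"
  using continuous_on_grad_test_fun[OF assms] test_fun_vanishes(2)[OF assms]
  by (intro integrable_continuous_vanishing_outside_ball continuous_intros) auto

definition hardy_potential :: "real \<Rightarrow> ('a::euclidean_space \<Rightarrow> real) \<Rightarrow> 'a \<Rightarrow> real" where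
  "hardy_potential \<delta> \<phi> x = (\<phi> x)\<^sup>2 / (2 * (x \<bullet> x + \<delta>\<^sup>2))"

definition hardy_field :: "real \<Rightarrow> ('a::euclidean_space \<Rightarrow> real) \<Rightarrow> 'a \<Rightarrow> 'a" where
  "hardy_field \<delta> \<phi> x = (\<phi> x / (x \<bullet> x + \<delta>\<^sup>2)) *\<^sub>R grad \<phi> x - ((\<phi> x)\<^sup>2 / (x \<bullet> x + \<delta>\<^sup>2)\<^sup>2) *\<^sub>R x"

lemma has_derivative_hardy_potential:
  fixes \<phi> :: "'a::euclidean_space \<Rightarrow> real"
  assumes "test_fun \<phi>" "0 < \<delta>"
  shows "(hardy_potential \<delta> \<phi> has_derivative (\<lambda>h. hardy_field \<delta> \<phi> x \<bullet> h)) (at x)"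
proof -
  define d where "d y = y \<bullet> y + \<delta>\<^sup>2" for y :: 'a
  have "d x \<noteq> 0"
    using assms(2) add_nonneg_pos[of "x \<bullet> x" "\<delta>\<^sup>2"] by (simp add: d_def)
  moreover have "(d has_derivative (\<lambda>h. 2 * (x \<bullet> h))) (at x)"
    unfolding d_def[abs_def] by (auto intro!: derivative_eq_intros simp: inner_commute)
  ultimately have "((\<lambda>y. (\<phi> y)\<^sup>2 / (2 * d y)) has_derivative
      (\<lambda>h. \<phi> x * (grad \<phi> x \<bullet> h) / d x - (\<phi> x)\<^sup>2 * (x \<bullet> h) / (d x)\<^sup>2)) (at x)"
    using test_fun_has_derivative[OF assms(1)]
    by (auto intro!: derivative_eq_intros ext simp: field_simps power2_eq_square)
  then show ?thesis
    by (simp add: hardy_potential_def[abs_def] hardy_field_def d_def inner_diff_left)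
qed

lemma hardy_field_divergence:
  fixes \<phi> :: "'a::euclidean_space \<Rightarrow> real"
  assumes tf: "test_fun \<phi>" and \<delta>: "0 < \<delta>"
  shows "integrable lborel (hardy_potential \<delta> \<phi>)"
    and "integrable lborel (\<lambda>x. hardy_field \<delta> \<phi> x \<bullet> x)"
    and "(\<integral>x. hardy_field \<delta> \<phi> x \<bullet> x \<partial>lborel) = - real DIM('a) * (\<integral>x. hardy_potential \<delta> \<phi> x \<partial>lborel)"
proof -
  have nz: "x \<bullet> x + \<delta>\<^sup>2 \<noteq> 0" for x :: 'a
    using \<delta> add_nonneg_pos[of "x \<bullet> x" "\<delta>\<^sup>2"] by simp
  have cont: "continuous_on UNIV (hardy_field \<delta> \<phi>)"
    unfolding hardy_field_def[abs_def] using continuous_on_test_fun[OF tf] continuous_on_grad_test_fun[OF tf] nz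
    by (intro continuous_intros) auto
  have vanish: "hardy_potential \<delta> \<phi> x = 0" "hardy_field \<delta> \<phi> x = 0" if "1 \<le> norm x" for x
    using test_fun_vanishes[OF tf that] by (simp_all add: hardy_potential_def hardy_field_def)
  have nz2: "2 * (x \<bullet> x + \<delta>\<^sup>2) \<noteq> 0" for x :: 'a
    using nz[of x] by (metis mult_eq_0_iff zero_neq_numeral)
  show "integrable lborel (hardy_potential \<delta> \<phi>)"
    unfolding hardy_potential_def[abs_def]
    by (rule integrable_test_fun_sq_div[OF tf _ nz2]) (intro continuous_intros)
  show "integrable lborel (\<lambda>x. hardy_field \<delta> \<phi> x \<bullet> x)"
    using cont vanish by (intro integrable_continuous_vanishing_outside_ball continuous_intros) auto
  show "(\<integral>x. hardy_field \<delta> \<phi> x \<bullet> x \<partial>lborel) = - real DIM('a) * (\<integral>x. hardy_potential \<delta> \<phi> x \<partial>lborel)"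
    using cont vanish by (intro integral_radial_derivative has_derivative_hardy_potential tf \<delta>) auto
qed

lemma hardy_test_fun:
  fixes \<phi> :: "'a::euclidean_space \<Rightarrow> real"
  assumes tf: "test_fun \<phi>" and \<delta>: "0 < \<delta>" and N: "DIM('a) \<ge> 3"
  shows "(\<integral>x. (\<phi> x)\<^sup>2 / (4 * (x \<bullet> x + \<delta>\<^sup>2)) \<partial>lborel) \<le> (\<integral>x. (norm (grad \<phi> x))\<^sup>2 \<partial>lborel)"
proof -
  let ?rhs = "\<lambda>x. (norm (grad \<phi> x))\<^sup>2 + hardy_field \<delta> \<phi> x \<bullet> x + DIM('a) * hardy_potential \<delta> \<phi> x"
  note field = hardy_field_divergence[OF tf \<delta>] and int_g = integrable_grad_test_fun_sq[OF tf]
  have pos: "0 < x \<bullet> x + \<delta>\<^sup>2" for x :: 'a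
    using \<delta> by (simp add: add_nonneg_pos)
  have "(\<integral>x. (\<phi> x)\<^sup>2 / (4 * (x \<bullet> x + \<delta>\<^sup>2)) \<partial>lborel) \<le> (\<integral>x. ?rhs x \<partial>lborel)"
  proof (rule integral_mono)
    have nz4: "4 * (x \<bullet> x + \<delta>\<^sup>2) \<noteq> 0" for x :: 'a
      using pos[of x] by (metis less_irrefl mult_eq_0_iff zero_neq_numeral)
    show "integrable lborel (\<lambda>x. (\<phi> x)\<^sup>2 / (4 * (x \<bullet> x + \<delta>\<^sup>2)))"
      by (rule integrable_test_fun_sq_div[OF tf _ nz4]) (intro continuous_intros)
    show "integrable lborel ?rhs"
      using int_g field by auto
    show "(\<phi> x)\<^sup>2 / (4 * (x \<bullet> x + \<delta>\<^sup>2)) \<le> ?rhs x" for x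
      using hardy_pointwise[where d = "x \<bullet> x + \<delta>\<^sup>2" and x = x and g = "grad \<phi> x" and a = "\<phi> x"] pos[of x] N
      by (simp add: hardy_field_def hardy_potential_def inner_diff_left)
  qed
  also have "\<dots> = (\<integral>x. (norm (grad \<phi> x))\<^sup>2 \<partial>lborel)"
    using int_g field by simp
  finally show ?thesis .
qed

text \<open>The right-hand side is \<open>8/\<alpha>\<^sup>2\<close> times the Hardy weight with \<open>\<delta> = 1/\<alpha>\<close>.\<close>
lemma one_minus_powr_le_hardy_weight:
  fixes \<alpha> \<rho> :: real
  assumes "1 \<le> \<alpha>" "0 \<le> \<rho>" "\<rho> < 1"
  shows "(1 - \<rho>) powr \<alpha> \<le> 8 / \<alpha>\<^sup>2 * (1 / (4 * (\<rho>\<^sup>2 + (1/\<alpha>)\<^sup>2)))"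
proof -
  have "(1 - \<rho>) powr \<alpha> \<le> exp (-\<rho>) powr \<alpha>"
    using assms by (intro powr_mono2) (auto simp: exp_ge_add_one_self[of "-\<rho>", simplified])
  also have "\<dots> = exp (- (\<alpha> * \<rho>))"
    by (simp add: powr_def)
  also have "\<dots> \<le> 2 / (1 + (\<alpha> * \<rho>)\<^sup>2)"
  proof -
    have "0 \<le> \<alpha> * \<rho>"
      using assms by simp
    then have "1 + (\<alpha> * \<rho>)\<^sup>2 \<le> 2 * exp (\<alpha> * \<rho>)"
      using exp_lower_Taylor_quadratic[of "\<alpha> * \<rho>"] by linarith
    then show ?thesis
      by (simp add: exp_minus field_simps add_pos_nonneg)
  qed
  also have "\<dots> = 8 / (4 * (1 + (\<alpha> * \<rho>)\<^sup>2))"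
    using add_pos_nonneg[of 1 "(\<alpha> * \<rho>)\<^sup>2"] by (simp add: divide_simps)
  also have "4 * (1 + (\<alpha> * \<rho>)\<^sup>2) = \<alpha>\<^sup>2 * (4 * (\<rho>\<^sup>2 + (1/\<alpha>)\<^sup>2))"
    using assms by (simp add: field_simps power2_eq_square)
  finally show ?thesis by simp
qed

lemma norm_sq_le_split:
  fixes a b :: "'a::real_normed_vector"
  shows "(norm a)\<^sup>2 \<le> 2 * (norm b)\<^sup>2 + 2 * (norm (a - b))\<^sup>2"
proof -
  have "norm a \<le> norm b + norm (a - b)"
    using norm_triangle_ineq[of b "a - b"] by simp
  then have "(norm a)\<^sup>2 \<le> (norm b + norm (a - b))\<^sup>2"
    by (simp add: power_mono)
  also have "\<dots> \<le> 2 * (norm b)\<^sup>2 + 2 * (norm (a - b))\<^sup>2"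
    using zero_le_power2[of "norm b - norm (a - b)"] by (simp add: power2_eq_square algebra_simps)
  finally show ?thesis .
qed

lemma sq_div_le_split:
  fixes a b c d :: real
  assumes "0 < c" "c \<le> d"
  shows "a\<^sup>2 / d \<le> 2 * (b\<^sup>2 / d) + 2 / c * (b - a)\<^sup>2"
proof -
  have "a\<^sup>2 / d \<le> (2 * b\<^sup>2 + 2 * (b - a)\<^sup>2) / d"
    using norm_sq_le_split[of a b] assms by (intro divide_right_mono) (auto simp: power2_commute)
  also have "(b - a)\<^sup>2 / d \<le> (b - a)\<^sup>2 / c"
    using assms by (intro divide_left_mono) auto
  then have "(2 * b\<^sup>2 + 2 * (b - a)\<^sup>2) / d \<le> 2 * (b\<^sup>2 / d) + 2 / c * (b - a)\<^sup>2"
    by (simp add: add_divide_distrib)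
  finally show ?thesis .
qed

lemma nn_integral_le_split:
  fixes a b d :: "'a \<Rightarrow> real"
  assumes "b \<in> borel_measurable M" "d \<in> borel_measurable M"
    and "\<And>x. 0 \<le> b x" "\<And>x. 0 \<le> d x" "0 \<le> c"
    and "\<And>x. a x \<le> 2 * b x + c * d x"
  shows "(\<integral>\<^sup>+x. a x \<partial>M) \<le> 2 * (\<integral>\<^sup>+x. b x \<partial>M) + c * (\<integral>\<^sup>+x. d x \<partial>M)"
proof -
  have "ennreal (a x) \<le> ennreal (2 * b x + c * d x)" for x
    using assms(6) by (rule ennreal_leI)
  also have "ennreal (2 * b x + c * d x) = 2 * ennreal (b x) + ennreal c * ennreal (d x)" for x
    using assms(3-5) by (simp add: ennreal_plus ennreal_mult)
  finally have "(\<integral>\<^sup>+x. a x \<partial>M) \<le> (\<integral>\<^sup>+x. 2 * ennreal (b x) + ennreal c * ennreal (d x) \<partial>M)"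
    by (intro nn_integral_mono)
  also have "\<dots> = 2 * (\<integral>\<^sup>+x. b x \<partial>M) + c * (\<integral>\<^sup>+x. d x \<partial>M)"
    using assms(1,2) by (simp add: nn_integral_add nn_integral_cmult)
  finally show ?thesis .
qed

lemma H10_vanishes_outside_ball:
  assumes "H10 u G"
  shows "AE x in lborel. 1 \<le> norm x \<longrightarrow> u x = 0"
proof -
  obtain \<phi> where [measurable]: "u \<in> borel_measurable lborel" and tf: "\<And>k. test_fun (\<phi> k)"
    and lim: "(\<lambda>k. \<integral>\<^sup>+x. ennreal ((\<phi> k x - u x)\<^sup>2) \<partial>lborel) \<longlonglongrightarrow> 0"
    using assms unfolding H10_def by blast
  let ?O = "\<integral>\<^sup>+x. ennreal (indicator {x. 1 \<le> norm x} x * (u x)\<^sup>2) \<partial>lborel"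
  have "?O \<le> (\<integral>\<^sup>+x. ennreal ((\<phi> k x - u x)\<^sup>2) \<partial>lborel)" for k
    using test_fun_vanishes(1)[OF tf] by (intro nn_integral_mono) (simp add: indicator_def)
  then have "?O \<le> 0"
    by (intro tendsto_le[OF trivial_limit_sequentially lim tendsto_const]) simp
  then have "?O = 0"
    by simp
  then have "AE x in lborel. ennreal (indicator {x. 1 \<le> norm x} x * (u x)\<^sup>2) = 0"
    by (subst (asm) nn_integral_0_iff_AE) auto
  then show ?thesis
    by (rule eventually_mono) (simp add: indicator_def)
qed

lemma H10_grad_sq_integrable:
  assumes "H10 u G"
  shows "integrable lborel (\<lambda>x. (norm (G x))\<^sup>2)"
proof -
  obtain \<phi> where [measurable]: "G \<in> borel_measurable lborel" and tf: "\<And>k. test_fun (\<phi> k)"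
    and lim: "(\<lambda>k. \<integral>\<^sup>+x. ennreal ((norm (grad (\<phi> k) x - G x))\<^sup>2) \<partial>lborel) \<longlonglongrightarrow> 0"
    using assms unfolding H10_def by blast
  from order_tendstoD(2)[OF lim, of 1] obtain k
    where k: "(\<integral>\<^sup>+x. ennreal ((norm (grad (\<phi> k) x - G x))\<^sup>2) \<partial>lborel) < 1"
    by (auto simp: eventually_sequentially)
  note grad_int = integrable_grad_test_fun_sq[OF tf]
  have [measurable]: "grad (\<phi> k) \<in> borel_measurable lborel"
    using continuous_on_grad_test_fun[OF tf] by (simp add: borel_measurable_continuous_onI)
  have "(norm (G x))\<^sup>2 \<le> 2 * (norm (grad (\<phi> k) x))\<^sup>2 + 2 * (norm (grad (\<phi> k) x - G x))\<^sup>2" for x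
    using norm_sq_le_split[of "G x" "grad (\<phi> k) x"] by (simp add: norm_minus_commute)
  then have "(\<integral>\<^sup>+x. (norm (G x))\<^sup>2 \<partial>lborel) \<le> 2 * (\<integral>\<^sup>+x. (norm (grad (\<phi> k) x))\<^sup>2 \<partial>lborel)
      + ennreal 2 * (\<integral>\<^sup>+x. (norm (grad (\<phi> k) x - G x))\<^sup>2 \<partial>lborel)"
    by (intro nn_integral_le_split) auto
  also have "\<dots> < \<infinity>"
    using k nn_integral_eq_integral[OF grad_int] ennreal_less_top[of 1]
    by (auto simp: ennreal_mult_eq_top_iff less_top[symmetric] dest: order.strict_trans)
  finally show ?thesis
    by (simp add: integrable_iff_bounded)
qed

lemma hardy_approximation:
  fixes u :: "'a::euclidean_space \<Rightarrow> real" and G :: "'a \<Rightarrow> 'a"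
  assumes tf: "test_fun \<phi>" and [measurable]: "u \<in> borel_measurable lborel" "G \<in> borel_measurable lborel"
    and \<delta>: "0 < \<delta>" and N: "DIM('a) \<ge> 3"
  shows "(\<integral>\<^sup>+x. (u x)\<^sup>2 / (4 * (x \<bullet> x + \<delta>\<^sup>2)) \<partial>lborel)
    \<le> 2 * (2 * (\<integral>\<^sup>+x. (norm (G x))\<^sup>2 \<partial>lborel) + ennreal 2 * (\<integral>\<^sup>+x. (norm (grad \<phi> x - G x))\<^sup>2 \<partial>lborel))
      + ennreal (2 / (4 * \<delta>\<^sup>2)) * (\<integral>\<^sup>+x. (\<phi> x - u x)\<^sup>2 \<partial>lborel)"
proof -
  have [measurable]: "\<phi> \<in> borel_measurable lborel" "grad \<phi> \<in> borel_measurable lborel"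
    using continuous_on_test_fun[OF tf] continuous_on_grad_test_fun[OF tf]
    by (simp_all add: borel_measurable_continuous_onI)
  define d where "d x = 4 * (x \<bullet> x + \<delta>\<^sup>2)" for x :: 'a
  have d: "4 * \<delta>\<^sup>2 \<le> d x" "0 < d x" for x
    using \<delta> by (auto simp: d_def add_nonneg_pos)
  have "(u x)\<^sup>2 / d x \<le> 2 * ((\<phi> x)\<^sup>2 / d x) + 2 / (4 * \<delta>\<^sup>2) * (\<phi> x - u x)\<^sup>2" for x
    using \<delta> d(1) by (intro sq_div_le_split) auto
  then have "(\<integral>\<^sup>+x. (u x)\<^sup>2 / d x \<partial>lborel)
      \<le> 2 * (\<integral>\<^sup>+x. (\<phi> x)\<^sup>2 / d x \<partial>lborel) + ennreal (2 / (4 * \<delta>\<^sup>2)) * (\<integral>\<^sup>+x. (\<phi> x - u x)\<^sup>2 \<partial>lborel)"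
    using d(2) by (intro nn_integral_le_split) (auto simp: d_def)
  also have "(\<integral>\<^sup>+x. (\<phi> x)\<^sup>2 / d x \<partial>lborel) \<le> (\<integral>\<^sup>+x. (norm (grad \<phi> x))\<^sup>2 \<partial>lborel)"
  proof -
    have d_nz: "d x \<noteq> 0" for x
      using d(2)[of x] by simp
    have "integrable lborel (\<lambda>x. (\<phi> x)\<^sup>2 / d x)"
      by (rule integrable_test_fun_sq_div[OF tf _ d_nz]) (unfold d_def[abs_def], intro continuous_intros)
    with integrable_grad_test_fun_sq[OF tf] hardy_test_fun[OF tf \<delta> N] d(2) show ?thesis
      by (simp add: nn_integral_eq_integral d_def less_imp_le)
  qed
  also have "(\<integral>\<^sup>+x. (norm (grad \<phi> x))\<^sup>2 \<partial>lborel)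
      \<le> 2 * (\<integral>\<^sup>+x. (norm (G x))\<^sup>2 \<partial>lborel) + ennreal 2 * (\<integral>\<^sup>+x. (norm (grad \<phi> x - G x))\<^sup>2 \<partial>lborel)"
    using norm_sq_le_split[of "grad \<phi> _" "G _"] by (intro nn_integral_le_split) auto
  finally show ?thesis
    by (simp add: d_def add_right_mono mult_left_mono)
qed

lemma H10_hardy:
  fixes u :: "'a::euclidean_space \<Rightarrow> real"
  assumes H: "H10 u G" and \<delta>: "0 < \<delta>" and N: "DIM('a) \<ge> 3"
  shows "(\<integral>\<^sup>+x. (u x)\<^sup>2 / (4 * (x \<bullet> x + \<delta>\<^sup>2)) \<partial>lborel) \<le> 4 * (\<integral>\<^sup>+x. (norm (G x))\<^sup>2 \<partial>lborel)"
proof -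
  obtain \<phi> where meas: "u \<in> borel_measurable lborel" "G \<in> borel_measurable lborel"
    and tf: "\<And>k. test_fun (\<phi> k)"
    and A: "(\<lambda>k. \<integral>\<^sup>+x. ennreal ((\<phi> k x - u x)\<^sup>2) \<partial>lborel) \<longlonglongrightarrow> 0"
    and B: "(\<lambda>k. \<integral>\<^sup>+x. ennreal ((norm (grad (\<phi> k) x - G x))\<^sup>2) \<partial>lborel) \<longlonglongrightarrow> 0"
    using H unfolding H10_def by blast
  let ?AG = "\<integral>\<^sup>+x. (norm (G x))\<^sup>2 \<partial>lborel"
  have "(\<lambda>k. 2 * (2 * ?AG + ennreal 2 * (\<integral>\<^sup>+x. (norm (grad (\<phi> k) x - G x))\<^sup>2 \<partial>lborel))
        + ennreal (2 / (4 * \<delta>\<^sup>2)) * (\<integral>\<^sup>+x. (\<phi> k x - u x)\<^sup>2 \<partial>lborel))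
      \<longlonglongrightarrow> 2 * (2 * ?AG + ennreal 2 * 0) + ennreal (2 / (4 * \<delta>\<^sup>2)) * 0"
    by (intro tendsto_add ennreal_tendsto_cmult tendsto_const A B) auto
  then have "(\<integral>\<^sup>+x. (u x)\<^sup>2 / (4 * (x \<bullet> x + \<delta>\<^sup>2)) \<partial>lborel) \<le> 2 * (2 * ?AG)"
    using hardy_approximation[OF tf meas \<delta> N] by (intro tendsto_le[OF trivial_limit_sequentially]) auto
  then show ?thesis
    by (simp add: mult.assoc[symmetric])
qed

lemma integral_ball_weighted_sq_pos:
  fixes u w :: "'a::euclidean_space \<Rightarrow> real"
  assumes [measurable]: "u \<in> borel_measurable lborel"
    and int: "integrable lborel (\<lambda>x. indicator (ball 0 1) x *\<^sub>R (w x * (u x)\<^sup>2))"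
    and w: "\<And>x. norm x < 1 \<Longrightarrow> 0 < w x"
    and outside: "AE x in lborel. 1 \<le> norm x \<longrightarrow> u x = 0"
    and nonzero: "(\<integral>\<^sup>+x. (u x)\<^sup>2 \<partial>lborel) \<noteq> 0"
  shows "0 < (\<integral>x. indicator (ball 0 1) x *\<^sub>R (w x * (u x)\<^sup>2) \<partial>lborel)"
proof (rule ccontr)
  have nonneg: "0 \<le> indicator (ball 0 1) x *\<^sub>R (w x * (u x)\<^sup>2)" for x
    using w[of x] by (simp add: indicator_def mult_nonneg_nonneg less_imp_le)
  assume "\<not> ?thesis"
  moreover have "0 \<le> (\<integral>x. indicator (ball 0 1) x *\<^sub>R (w x * (u x)\<^sup>2) \<partial>lborel)"
    using nonneg by (simp add: integral_nonneg_AE)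
  ultimately have "(\<integral>x. indicator (ball 0 1) x *\<^sub>R (w x * (u x)\<^sup>2) \<partial>lborel) = 0"
    by simp
  then have "AE x in lborel. indicator (ball 0 1) x *\<^sub>R (w x * (u x)\<^sup>2) = 0"
    using integral_nonneg_eq_0_iff_AE[OF int] nonneg by simp
  with outside have "AE x in lborel. u x = 0"
  proof eventually_elim
    case (elim x)
    show ?case
    proof (cases "norm x < 1")
      case True
      with elim(2) w[of x] show ?thesis
        by (simp add: indicator_def)
    next
      case False
      with elim(1) show ?thesis
        by simp
    qed
  qed
  then have "(\<integral>\<^sup>+x. (u x)\<^sup>2 \<partial>lborel) = 0"
    by (subst nn_integral_0_iff_AE) (auto elim: eventually_mono)
  with nonzero show False ..
qed

lemma H10_weighted_nn_integral_le:
  fixes u :: "'a::euclidean_space \<Rightarrow> real"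
  assumes H: "H10 u G" and \<alpha>: "1 \<le> \<alpha>" and N: "DIM('a) \<ge> 3"
  shows "(\<integral>\<^sup>+x. indicator (ball 0 1) x *\<^sub>R ((1 - norm x) powr \<alpha> * (u x)\<^sup>2) \<partial>lborel)
    \<le> ennreal (32 / \<alpha>\<^sup>2 * (\<integral>x. (norm (G x))\<^sup>2 \<partial>lborel))"
proof -
  have [measurable]: "u \<in> borel_measurable lborel"
    using H by (simp add: H10_def)
  let ?W = "\<lambda>x. (u x)\<^sup>2 / (4 * (x \<bullet> x + (1/\<alpha>)\<^sup>2))"
  have "indicator (ball 0 1) x *\<^sub>R ((1 - norm x) powr \<alpha> * (u x)\<^sup>2) \<le> 8 / \<alpha>\<^sup>2 * ?W x" for x
  proof (cases "norm x < 1")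
    case True
    then have "(1 - norm x) powr \<alpha> * (u x)\<^sup>2 \<le> 8 / \<alpha>\<^sup>2 * (1 / (4 * (x \<bullet> x + (1/\<alpha>)\<^sup>2))) * (u x)\<^sup>2"
      using one_minus_powr_le_hardy_weight[OF \<alpha>, of "norm x"]
      by (intro mult_right_mono) (auto simp: power2_norm_eq_inner)
    with True show ?thesis
      by simp
  qed simp
  then have "(\<integral>\<^sup>+x. indicator (ball 0 1) x *\<^sub>R ((1 - norm x) powr \<alpha> * (u x)\<^sup>2) \<partial>lborel)
      \<le> (\<integral>\<^sup>+x. ennreal (8 / \<alpha>\<^sup>2) * ?W x \<partial>lborel)"
    by (intro nn_integral_mono) (simp add: ennreal_mult[symmetric] ennreal_leI)
  also have "\<dots> = ennreal (8 / \<alpha>\<^sup>2) * (\<integral>\<^sup>+x. ?W x \<partial>lborel)"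
    by (rule nn_integral_cmult) measurable
  also have "\<dots> \<le> ennreal (8 / \<alpha>\<^sup>2) * (4 * ennreal (\<integral>x. (norm (G x))\<^sup>2 \<partial>lborel))"
    using H10_hardy[OF H _ N, of "1/\<alpha>"] \<alpha> nn_integral_eq_integral[OF H10_grad_sq_integrable[OF H]]
    by (intro mult_left_mono) auto
  also have "\<dots> = ennreal (8 / \<alpha>\<^sup>2) * ennreal (4 * (\<integral>x. (norm (G x))\<^sup>2 \<partial>lborel))"
    by (simp add: ennreal_mult integral_nonneg_AE)
  also have "\<dots> = ennreal (32 / \<alpha>\<^sup>2 * (\<integral>x. (norm (G x))\<^sup>2 \<partial>lborel))"
    by (simp add: integral_nonneg_AE field_simps flip: ennreal_mult)
  finally show ?thesis .
qed

lemma H10_weighted_ratio_ge: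
  fixes u :: "'a::euclidean_space \<Rightarrow> real"
  assumes H: "H10 u G" and nonzero: "(\<integral>\<^sup>+x. (u x)\<^sup>2 \<partial>lborel) \<noteq> 0"
    and \<alpha>: "1 \<le> \<alpha>" and N: "DIM('a) \<ge> 3"
  shows "\<alpha>\<^sup>2 / 32 \<le> (\<integral>x. (norm (G x))\<^sup>2 \<partial>lborel) / (\<integral>x\<in>ball 0 1. (1 - norm x) powr \<alpha> * (u x)\<^sup>2 \<partial>lborel)"
proof -
  have [measurable]: "u \<in> borel_measurable lborel"
    using H by (simp add: H10_def)
  define h where "h x = indicator (ball 0 1) x *\<^sub>R ((1 - norm x) powr \<alpha> * (u x)\<^sup>2)" for x :: 'a
  have [measurable]: "ball (0::'a) 1 \<in> sets lborel"
    by simp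
  have h_nonneg: "0 \<le> h x" for x
    by (simp add: h_def indicator_def)
  have h_bound: "(\<integral>\<^sup>+x. h x \<partial>lborel) \<le> ennreal (32 / \<alpha>\<^sup>2 * (\<integral>x. (norm (G x))\<^sup>2 \<partial>lborel))"
    unfolding h_def by (rule H10_weighted_nn_integral_le[OF H \<alpha> N])
  have int_h: "integrable lborel h"
    using le_less_trans[OF h_bound ennreal_less_top] h_nonneg
    by (simp add: integrable_iff_bounded h_def[abs_def])
  have "(\<integral>x. h x \<partial>lborel) \<le> 32 / \<alpha>\<^sup>2 * (\<integral>x. (norm (G x))\<^sup>2 \<partial>lborel)"
    using h_bound nn_integral_eq_integral[OF int_h] h_nonneg
    by (simp add: ennreal_le_iff integral_nonneg_AE)
  then have "\<alpha>\<^sup>2 / 32 * (\<integral>x. h x \<partial>lborel) \<le> \<alpha>\<^sup>2 / 32 * (32 / \<alpha>\<^sup>2 * (\<integral>x. (norm (G x))\<^sup>2 \<partial>lborel))"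
    by (rule mult_left_mono) simp
  also have "\<dots> = (\<integral>x. (norm (G x))\<^sup>2 \<partial>lborel)"
    using \<alpha> by simp
  finally have "\<alpha>\<^sup>2 / 32 * (\<integral>x. h x \<partial>lborel) \<le> (\<integral>x. (norm (G x))\<^sup>2 \<partial>lborel)" .
  moreover have "0 < (\<integral>x. h x \<partial>lborel)"
    using int_h H10_vanishes_outside_ball[OF H] nonzero unfolding h_def
    by (intro integral_ball_weighted_sq_pos) (auto simp: powr_gt_zero)
  moreover have "(\<integral>x\<in>ball 0 1. (1 - norm x) powr \<alpha> * (u x)\<^sup>2 \<partial>lborel) = (\<integral>x. h x \<partial>lborel)"
    by (simp add: set_lebesgue_integral_def h_def)
  ultimately show ?thesis
    by (simp add: pos_le_divide_eq)
qed

section \<open>The lower bound for \<open>\<Lambda>\<^sub>\<alpha>\<close>\<close>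

lemma Lambda_ge:
  assumes N: "DIM('a::euclidean_space) \<ge> 3" and \<alpha>: "1 \<le> \<alpha>"
  shows "\<alpha>\<^sup>2 / 32 \<le> Lambda TYPE('a) \<alpha>"
  unfolding Lambda_def
proof (rule cInf_greatest)
  show "{(\<integral>x. (norm (G x))\<^sup>2 \<partial>lborel) / (\<integral>x\<in>ball 0 1. (1 - norm x) powr \<alpha> * (u x)\<^sup>2 \<partial>lborel)
      | (u :: 'a \<Rightarrow> real) G. H10 u G \<and> radial u \<and> (\<integral>\<^sup>+ x. ennreal ((u x)\<^sup>2) \<partial>lborel) \<noteq> 0} \<noteq> {}"
    using H10_bump radial_bump nn_integral_bump_sq_nonzero by blast
qed (use H10_weighted_ratio_ge[OF _ _ \<alpha> N] in blast)

theorem mainTheorem13: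
  assumes "DIM('a::euclidean_space) \<ge> 3"
  shows "\<exists>C>0. Liminf at_top (\<lambda>\<alpha>. ereal (Lambda TYPE('a) \<alpha> / \<alpha>\<^sup>2)) \<ge> ereal C"
proof (intro exI conjI)
  show "ereal (1/32) \<le> Liminf at_top (\<lambda>\<alpha>. ereal (Lambda TYPE('a) \<alpha> / \<alpha>\<^sup>2))"
  proof (rule Liminf_bounded)
    show "\<forall>\<^sub>F \<alpha> in at_top. ereal (1/32) \<le> ereal (Lambda TYPE('a) \<alpha> / \<alpha>\<^sup>2)"
      using eventually_ge_at_top[of "1::real"]
    proof eventually_elim
      case (elim \<alpha>)
      with Lambda_ge[OF assms elim] show ?case
        by (simp add: le_divide_eq)
    qed
  qed
qed simp

end
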